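(* If $T\in\mathcal{T}$, then $C_T=\emptyset$, $A_T$ is an independent set, every vertex of $A_T$ has degree exactly $3$ in $T$, and $\nu(T)=|A_T|$. In particular $T$ is bipartite with partite sets $A_T$ and $D_T$.
   Context: Gallai–Edmonds sets: for a graph $G$, $D_G$ is the set of vertices not covered by at least one maximum matching, $A_G=N_G(D_G)\setminus D_G$, $C_G=V(G)\setminus(A_G\cup D_G)$. $\nu$ denotes the matching number, $n(T)$ the number of vertices. $\mathcal{T}$ is the set of all trees $T$ such that every vertex of $A_T$ has degree at most $3$ in $T$ and $\nu(T)=\frac{n(T)-1}{3}$. *)

theory Defs
  imports Main
begin

definition graph :: "'a set \<Rightarrow> 'a set set \<Rightarrow> bool" where
  "graph V E \<longleftrightarrow> finite V \<and>
     (\<forall>e\<in>E. \<exists>u v. e = {u, v} \<and> u \<noteq> v \<and> u \<in> V \<and> v \<in> V)"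

definition adj :: "'a set set \<Rightarrow> 'a \<Rightarrow> 'a \<Rightarrow> bool" where
  "adj E u v \<longleftrightarrow> {u, v} \<in> E"

definition connected :: "'a set \<Rightarrow> 'a set set \<Rightarrow> bool" where
  "connected V E \<longleftrightarrow> V \<noteq> {} \<and> (\<forall>u\<in>V. \<forall>v\<in>V. (adj E)\<^sup>*\<^sup>* u v)"

definition is_cycle :: "'a set set \<Rightarrow> 'a list \<Rightarrow> bool" where
  "is_cycle E vs \<longleftrightarrow> length vs \<ge> 3 \<and> distinct vs \<and>
     (\<forall>i. Suc i < length vs \<longrightarrow> adj E (vs ! i) (vs ! Suc i)) \<and>
     adj E (last vs) (hd vs)"

definition acyclic_graph :: "'a set set \<Rightarrow> bool" where
  "acyclic_graph E \<longleftrightarrow> \<not> (\<exists>vs. is_cycle E vs)"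

definition tree :: "'a set \<Rightarrow> 'a set set \<Rightarrow> bool" where
  "tree V E \<longleftrightarrow> graph V E \<and> connected V E \<and> acyclic_graph E"

definition degree :: "'a set set \<Rightarrow> 'a \<Rightarrow> nat" where
  "degree E v = card {e\<in>E. v \<in> e}"

definition matching :: "'a set set \<Rightarrow> 'a set set \<Rightarrow> bool" where
  "matching E M \<longleftrightarrow> M \<subseteq> E \<and> (\<forall>e1\<in>M. \<forall>e2\<in>M. e1 \<noteq> e2 \<longrightarrow> e1 \<inter> e2 = {})"

definition matching_number :: "'a set set \<Rightarrow> nat" where
  "matching_number E = Max (card ` {M. matching E M})"

definition maximum_matching :: "'a set set \<Rightarrow> 'a set set \<Rightarrow> bool" where
  "maximum_matching E M \<longleftrightarrow> matching E M \<and> card M = matching_number E"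

definition neighbourhood :: "'a set \<Rightarrow> 'a set set \<Rightarrow> 'a set \<Rightarrow> 'a set" where
  "neighbourhood V E S = {u\<in>V. \<exists>v\<in>S. adj E u v}"

definition GE_D :: "'a set \<Rightarrow> 'a set set \<Rightarrow> 'a set" where
  "GE_D V E = {v\<in>V. \<exists>M. maximum_matching E M \<and> v \<notin> \<Union>M}"

definition GE_A :: "'a set \<Rightarrow> 'a set set \<Rightarrow> 'a set" where
  "GE_A V E = neighbourhood V E (GE_D V E) - GE_D V E"

definition GE_C :: "'a set \<Rightarrow> 'a set set \<Rightarrow> 'a set" where
  "GE_C V E = V - (GE_A V E \<union> GE_D V E)"

definition independent :: "'a set \<Rightarrow> 'a set set \<Rightarrow> 'a set \<Rightarrow> bool" where
  "independent V E S \<longleftrightarrow> S \<subseteq> V \<and> (\<forall>u\<in>S. \<forall>v\<in>S. \<not> adj E u v)"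

text \<open>The class \<open>\<T>\<close>: trees whose A-vertices have degree at most 3 and with
  \<open>\<nu>(T) = (n(T) - 1)/3\<close>, i.e. \<open>3 \<nu>(T) + 1 = n(T)\<close>.\<close>
definition class_T :: "'a set \<Rightarrow> 'a set set \<Rightarrow> bool" where
  "class_T V E \<longleftrightarrow> tree V E \<and> (\<forall>v\<in>GE_A V E. degree E v \<le> 3) \<and>
     3 * matching_number E + 1 = card V"

definition bipartite_with :: "'a set \<Rightarrow> 'a set set \<Rightarrow> 'a set \<Rightarrow> 'a set \<Rightarrow> bool" where
  "bipartite_with V E X Y \<longleftrightarrow> X \<union> Y = V \<and> X \<inter> Y = {} \<and>
     (\<forall>e\<in>E. \<exists>x\<in>X. \<exists>y\<in>Y. e = {x, y})"

end

theory Submission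
  imports Defs
begin

text \<open>A tree is bipartite, and in a bipartite graph the Gallai--Edmonds set \<open>D\<close> is independent and
  every maximum matching covers \<open>A \<union> C\<close> and matches \<open>A\<close> injectively into \<open>D\<close>; both facts come from
  walking along alternating walks that start at exposed vertices and swapping matching edges on the
  way. Hence \<open>2 |A| + |C| \<le> 2 \<nu>\<close>. Counting the edges of the tree through their endpoints in \<open>A\<close>
  (each edge meets \<open>A\<close> or lies inside \<open>C\<close>, and at most 3 edges meet each vertex of \<open>A\<close>) and using
  that the forest induced on \<open>C\<close> has fewer than \<open>|C|\<close> edges, the hypothesis \<open>n = 3 \<nu> + 1\<close> leaves no
  slack: \<open>C\<close> is empty and every estimate is an equality.\<close>

lemma graph_vertices_subset: "graph V E \<Longrightarrow> \<Union>E \<subseteq> V"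
  unfolding graph_def by fastforce

lemma graph_finite_edges:
  assumes "graph V E"
  shows "finite E"
proof (rule finite_subset)
  show "E \<subseteq> Pow V"
    using graph_vertices_subset[OF assms] by blast
  show "finite (Pow V)"
    using assms unfolding graph_def by simp
qed

lemma graph_edgeE:
  assumes "graph V E" "e \<in> E" "x \<in> e"
  obtains y where "e = {x, y}" "x \<noteq> y" "x \<in> V" "y \<in> V"
proof -
  obtain u v where "e = {u, v}" "u \<noteq> v" "u \<in> V" "v \<in> V"
    using assms(1,2) unfolding graph_def by blast
  with assms(3) that show thesis
    by (auto simp: insert_commute)
qed

lemma adj_commute: "adj E u v \<longleftrightarrow> adj E v u"
  unfolding adj_def by (simp add: insert_commute)

lemma graph_adjD:
  assumes "graph V E" "adj E u v"
  shows "u \<noteq> v" "u \<in> V" "v \<in> V"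
proof -
  obtain w where "{u, v} = {u, w}" "u \<noteq> w" "u \<in> V" "w \<in> V"
    using graph_edgeE[of V E "{u, v}" u] assms unfolding adj_def by blast
  then show "u \<noteq> v" "u \<in> V" "v \<in> V"
    by (auto simp: doubleton_eq_iff)
qed

lemma graph_card_edge: "graph V E \<Longrightarrow> e \<in> E \<Longrightarrow> card e = 2"
  unfolding graph_def by auto

lemma matching_subset: "matching E M \<Longrightarrow> M \<subseteq> E"
  unfolding matching_def by blast

lemma matching_disjoint:
  "matching E M \<Longrightarrow> e1 \<in> M \<Longrightarrow> e2 \<in> M \<Longrightarrow> e1 \<noteq> e2 \<Longrightarrow> e1 \<inter> e2 = {}"
  unfolding matching_def by blast

lemma matching_partnerE:
  assumes "graph V E" "matching E M" "x \<in> \<Union>M"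
  obtains y where "{x, y} \<in> M" "x \<noteq> y" "y \<in> V"
proof -
  obtain e where e: "e \<in> M" "x \<in> e"
    using assms(3) by blast
  then have "e \<in> E"
    using matching_subset[OF assms(2)] by blast
  with e show thesis
    using graph_edgeE[OF assms(1)] that by metis
qed

lemma matching_unique_partner:
  assumes "matching E M" "{x, y} \<in> M" "{x, y'} \<in> M"
  shows "y = y'"
  using matching_disjoint[OF assms] by (auto simp: doubleton_eq_iff)

lemma finite_matchings:
  assumes "graph V E"
  shows "finite {M. matching E M}"
  using graph_finite_edges[OF assms] unfolding matching_def by (simp add: finite_subset)

lemma card_le_matching_number:
  "graph V E \<Longrightarrow> matching E M \<Longrightarrow> card M \<le> matching_number E"
  unfolding matching_number_def by (rule Max_ge) (auto intro: finite_imageI finite_matchings)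

lemma maximum_matching_exists:
  assumes "graph V E"
  shows "\<exists>M. maximum_matching E M"
proof -
  have "matching E {}"
    unfolding matching_def by blast
  then have "matching_number E \<in> card ` {M. matching E M}"
    unfolding matching_number_def using finite_matchings[OF assms] by (intro Max_in) auto
  then show ?thesis
    unfolding maximum_matching_def by auto
qed

lemma maximum_matching_no_exposed_edge:
  assumes "graph V E" "maximum_matching E M" "{u, v} \<in> E" "u \<notin> \<Union>M" "v \<notin> \<Union>M"
  shows False
proof -
  have m: "matching E M" and card_M: "card M = matching_number E"
    using assms(2) unfolding maximum_matching_def by blast+
  have "matching E (insert {u, v} M)"
    using m assms(3-5) unfolding matching_def by blast
  then have "card (insert {u, v} M) \<le> card M"
    using card_le_matching_number[OF assms(1)] card_M by metis
  moreover have "{u, v} \<notin> M"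
    using assms(4) by blast
  ultimately show False
    using graph_finite_edges[OF assms(1)] matching_subset[OF m] by (simp add: finite_subset)
qed

lemma matching_finite: "graph V E \<Longrightarrow> matching E M \<Longrightarrow> finite M"
  using graph_finite_edges matching_subset finite_subset by metis

lemma matching_swap:
  assumes m: "matching E N" and yz: "{y, z} \<in> N" and x: "x \<notin> \<Union>N" and xy: "{x, y} \<in> E"
  shows "matching E (insert {x, y} (N - {{y, z}}))"
  unfolding matching_def
proof (intro conjI ballI impI)
  show "insert {x, y} (N - {{y, z}}) \<subseteq> E"
    using matching_subset[OF m] xy by blast
  have rest: "{x, y} \<inter> e = {}" if "e \<in> N - {{y, z}}" for e
    using that x matching_disjoint[OF m _ yz, of e] by blast
  fix e1 e2
  assume "e1 \<in> insert {x, y} (N - {{y, z}})" "e2 \<in> insert {x, y} (N - {{y, z}})" "e1 \<noteq> e2"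
  then consider "e1 = {x, y}" "e2 \<in> N - {{y, z}}" | "e2 = {x, y}" "e1 \<in> N - {{y, z}}"
    | "e1 \<in> N" "e2 \<in> N"
    by auto
  then show "e1 \<inter> e2 = {}"
  proof cases
    case 1
    then show ?thesis using rest[of e2] by simp
  next
    case 2
    then show ?thesis using rest[of e1] by (simp add: Int_commute)
  next
    case 3
    then show ?thesis using matching_disjoint[OF m] \<open>e1 \<noteq> e2\<close> by blast
  qed
qed

lemma maximum_matching_swap:
  assumes g: "graph V E" and N: "maximum_matching E N" and yz: "{y, z} \<in> N"
    and x: "x \<notin> \<Union>N" and xy: "{x, y} \<in> E" and zx: "z \<noteq> x"
  shows "maximum_matching E (insert {x, y} (N - {{y, z}}))"
    and "z \<notin> \<Union>(insert {x, y} (N - {{y, z}}))"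
proof -
  have m: "matching E N"
    using N unfolding maximum_matching_def by blast
  have "y \<noteq> z"
    using graph_adjD(1)[OF g, of y z] yz matching_subset[OF m] unfolding adj_def by blast
  moreover have "z \<notin> e" if "e \<in> N - {{y, z}}" for e
    using that matching_disjoint[OF m _ yz, of e] by blast
  ultimately show "z \<notin> \<Union>(insert {x, y} (N - {{y, z}}))"
    using zx by blast
  have "finite N"
    by (rule matching_finite[OF g m])
  moreover have "{x, y} \<notin> N - {{y, z}}"
    using x by blast
  moreover have "card N > 0"
    using \<open>finite N\<close> yz card_gt_0_iff by blast
  ultimately have "card (insert {x, y} (N - {{y, z}})) = card N"
    using yz by simp
  with matching_swap[OF m yz x xy] show "maximum_matching E (insert {x, y} (N - {{y, z}}))"
    using N unfolding maximum_matching_def by simp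
qed

lemma card_Union_matching:
  assumes "graph V E" "matching E M"
  shows "card (\<Union>M) = 2 * card M"
proof -
  have card_2: "card e = 2" if "e \<in> M" for e
    using graph_card_edge[OF assms(1)] that matching_subset[OF assms(2)] by blast
  have "pairwise disjnt M"
    using matching_disjoint[OF assms(2)] unfolding pairwise_def disjnt_def by blast
  moreover have "finite e" if "e \<in> M" for e
    using card_2[OF that] by (metis card.infinite zero_neq_numeral)
  ultimately have "card (\<Union>M) = sum card M"
    by (rule card_Union_disjoint)
  then show ?thesis
    using card_2 by simp
qed

section \<open>Alternating walks\<close>

definition alt_step :: "'a set set \<Rightarrow> 'a set set \<Rightarrow> 'a \<Rightarrow> 'a \<Rightarrow> bool" where
  "alt_step E M x z \<longleftrightarrow> (\<exists>y. {x, y} \<in> E \<and> {y, z} \<in> M)"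

text \<open>\<open>alt_reachable V E M n z\<close>: \<open>z\<close> is the end of an \<open>M\<close>-alternating walk of length \<open>2 n\<close>
  that starts at an \<open>M\<close>-exposed vertex and ends with an \<open>M\<close>-edge.\<close>
definition alt_reachable :: "'a set \<Rightarrow> 'a set set \<Rightarrow> 'a set set \<Rightarrow> nat \<Rightarrow> 'a \<Rightarrow> bool" where
  "alt_reachable V E M n z \<longleftrightarrow> (\<exists>r\<in>V. r \<notin> \<Union>M \<and> (alt_step E M ^^ n) r z)"

lemma alt_reachable_0_iff: "alt_reachable V E M 0 z \<longleftrightarrow> z \<in> V \<and> z \<notin> \<Union>M"
  unfolding alt_reachable_def by auto

lemma alt_reachable_Suc:
  assumes "alt_reachable V E M n x" "{x, y} \<in> E" "{y, z} \<in> M"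
  shows "alt_reachable V E M (Suc n) z"
  using assms unfolding alt_reachable_def alt_step_def by auto

lemma alt_reachable_SucE:
  assumes "alt_reachable V E M (Suc n) z"
  obtains x y where "alt_reachable V E M n x" "{x, y} \<in> E" "{y, z} \<in> M"
proof -
  obtain r where r: "r \<in> V" "r \<notin> \<Union>M" "(alt_step E M ^^ Suc n) r z"
    using assms unfolding alt_reachable_def by blast
  then obtain x where "(alt_step E M ^^ n) r x" "alt_step E M x z"
    by (elim relpowp_Suc_E)
  with r that show thesis
    unfolding alt_reachable_def alt_step_def by blast
qed

text \<open>Induction on \<open>|M' - M|\<close>: if \<open>d\<close> is \<open>M\<close>-matched to \<open>y\<close> and \<open>y\<close> is \<open>M'\<close>-matched to \<open>z\<close>, swapping
  \<open>{y, z}\<close> for \<open>{d, y}\<close> in \<open>M'\<close> yields a maximum matching closer to \<open>M\<close> that misses \<open>z\<close>, and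
  \<open>z\<close> reaches \<open>d\<close> in one alternating step.\<close>
lemma exposed_imp_alt_reachable:
  assumes g: "graph V E" and M: "maximum_matching E M"
  shows "maximum_matching E M' \<Longrightarrow> d \<in> V \<Longrightarrow> d \<notin> \<Union>M' \<Longrightarrow> \<exists>n. alt_reachable V E M n d"
proof (induction "card (M' - M)" arbitrary: M' d rule: less_induct)
  case less
  have mM: "matching E M" and mM': "matching E M'"
    using M less.prems(1) unfolding maximum_matching_def by blast+
  show ?case
  proof (cases "d \<in> \<Union>M")
    case False
    then have "alt_reachable V E M 0 d"
      using less.prems(2) by (simp add: alt_reachable_0_iff)
    then show ?thesis ..
  next
    case True
    then obtain y where dy: "{d, y} \<in> M" "d \<noteq> y" "y \<in> V"
      by (rule matching_partnerE[OF g mM])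
    have dy_E: "{d, y} \<in> E"
      using dy(1) matching_subset[OF mM] by blast
    have "y \<in> \<Union>M'"
      using maximum_matching_no_exposed_edge[OF g less.prems(1) dy_E less.prems(3)] by blast
    then obtain z where yz: "{y, z} \<in> M'" "y \<noteq> z" "z \<in> V"
      by (rule matching_partnerE[OF g mM'])
    have zd: "z \<noteq> d"
      using yz less.prems(3) by blast
    let ?M1 = "insert {d, y} (M' - {{y, z}})"
    have M1: "maximum_matching E ?M1" "z \<notin> \<Union>?M1"
      using maximum_matching_swap[OF g less.prems(1) yz(1) less.prems(3) dy_E zd] by blast+
    have "{y, z} \<notin> M"
      using matching_unique_partner[OF mM, of y d z] dy zd by (auto simp: insert_commute)
    then have "?M1 - M = (M' - M) - {{y, z}}" and "{y, z} \<in> M' - M"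
      using dy yz by auto
    moreover have "finite M'"
      by (rule matching_finite[OF g mM'])
    ultimately have "card (?M1 - M) < card (M' - M)"
      by (metis card_Diff1_less finite_Diff)
    then obtain n where "alt_reachable V E M n z"
      using less.hyps M1 yz(3) by blast
    moreover have "{z, y} \<in> E" "{y, d} \<in> M"
      using yz(1) matching_subset[OF mM'] dy by (auto simp: insert_commute)
    ultimately have "alt_reachable V E M (Suc n) d"
      by (rule alt_reachable_Suc)
    then show ?thesis ..
  qed
qed

definition two_colouring :: "'a set set \<Rightarrow> ('a \<Rightarrow> bool) \<Rightarrow> bool" where
  "two_colouring E col \<longleftrightarrow> (\<forall>u v. adj E u v \<longrightarrow> col u \<noteq> col v)"

lemma two_colouringD: "two_colouring E col \<Longrightarrow> {u, v} \<in> E \<Longrightarrow> col u \<noteq> col v"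
  unfolding two_colouring_def adj_def by blast

text \<open>Induction on the alternating distance \<open>n\<close> of \<open>z\<close>: the matching for \<open>z\<close> arises from the one
  for its predecessor by a single swap. The third conjunct says that the \<open>M\<close>-edges given up so far
  lead to vertices of smaller distance; it guarantees that the \<open>M\<close>-edge into \<open>z\<close> is still available
  for that swap.\<close>
lemma alt_reachable_imp_exposed_aux:
  assumes g: "graph V E" and M: "maximum_matching E M" and col: "two_colouring E col"
  shows "alt_reachable V E M n z \<Longrightarrow> (\<forall>m<n. \<not> alt_reachable V E M m z) \<Longrightarrow>
    \<exists>N. maximum_matching E N \<and> z \<notin> \<Union>N \<and>
      (\<forall>y w. {y, w} \<in> M - N \<and> col y \<noteq> col z \<longrightarrow> w = z \<or> (\<exists>m<n. alt_reachable V E M m w)) \<and>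
      (\<forall>t\<in>\<Union>N. col t \<noteq> col z \<longrightarrow> t \<in> \<Union>M)"
proof (induction n arbitrary: z rule: less_induct)
  case (less n)
  show ?case
  proof (cases n)
    case 0
    then have "z \<notin> \<Union>M"
      using less.prems(1) by (simp add: alt_reachable_0_iff)
    with M show ?thesis
      by (intro exI[of _ M]) simp
  next
    case (Suc k)
    then obtain x y where x: "alt_reachable V E M k x" and xy: "{x, y} \<in> E" and yz: "{y, z} \<in> M"
      using less.prems(1) alt_reachable_SucE by metis
    define k' where "k' = (LEAST m. alt_reachable V E M m x)"
    have x': "alt_reachable V E M k' x" and "k' \<le> k"
      unfolding k'_def using x by (auto intro: LeastI Least_le)
    then have k'n: "k' < n"
      using Suc by simp
    have "\<forall>m<k'. \<not> alt_reachable V E M m x"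
      unfolding k'_def using not_less_Least by blast
    then obtain N where N: "maximum_matching E N" "x \<notin> \<Union>N"
      and N_given_up: "\<forall>y w. {y, w} \<in> M - N \<and> col y \<noteq> col x \<longrightarrow>
        w = x \<or> (\<exists>m<k'. alt_reachable V E M m w)"
      and N_covered: "\<forall>t\<in>\<Union>N. col t \<noteq> col x \<longrightarrow> t \<in> \<Union>M"
      using less.IH[OF k'n x'] by blast
    have yz_E: "{y, z} \<in> E"
      using yz M unfolding maximum_matching_def matching_def by blast
    have col_xy: "col x \<noteq> col y" and col_zx: "col z = col x"
      using two_colouringD[OF col xy] two_colouringD[OF col yz_E] by auto
    have zx: "z \<noteq> x"
      using x' k'n less.prems(2) by blast
    have not_earlier: "\<not> (\<exists>m<k'. alt_reachable V E M m z)"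
      using less.prems(2) k'n by auto
    have yz_N: "{y, z} \<in> N"
      using N_given_up yz col_xy zx not_earlier by blast
    let ?N' = "insert {x, y} (N - {{y, z}})"
    have N': "maximum_matching E ?N'" "z \<notin> \<Union>?N'"
      using maximum_matching_swap[OF g N(1) yz_N N(2) xy zx] by blast+
    have "w = z \<or> (\<exists>m<n. alt_reachable V E M m w)"
      if "{y', w} \<in> M - ?N'" "col y' \<noteq> col z" for y' w
    proof (cases "{y', w} = {y, z}")
      case True
      then show ?thesis
        using that(2) by (auto simp: doubleton_eq_iff)
    next
      case False
      then have "w = x \<or> (\<exists>m<k'. alt_reachable V E M m w)"
        using N_given_up that col_zx by blast
      then show ?thesis
        using x' k'n by (meson order.strict_trans)
    qed
    moreover have "t \<in> \<Union>M" if "t \<in> \<Union>?N'" "col t \<noteq> col z" for t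
    proof -
      have "t = y \<or> t \<in> \<Union>N"
        using that col_zx by blast
      then show ?thesis
        using yz N_covered that(2) col_zx by blast
    qed
    ultimately show ?thesis
      using N' by blast
  qed
qed

lemma alt_reachable_imp_exposed:
  assumes "graph V E" "maximum_matching E M" "two_colouring E col" "alt_reachable V E M n z"
  obtains N where "maximum_matching E N" "z \<notin> \<Union>N" "\<And>t. t \<in> \<Union>N \<Longrightarrow> col t \<noteq> col z \<Longrightarrow> t \<in> \<Union>M"
proof -
  let ?n = "LEAST m. alt_reachable V E M m z"
  have "alt_reachable V E M ?n z" "\<forall>m<?n. \<not> alt_reachable V E M m z"
    using assms(4) by (auto intro: LeastI dest: not_less_Least)
  then show thesis
    using alt_reachable_imp_exposed_aux[OF assms(1-3)] that by metis
qed

section \<open>The Gallai--Edmonds sets of a bipartite graph\<close>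

lemma GE_D_iff: "v \<in> GE_D V E \<longleftrightarrow> v \<in> V \<and> (\<exists>M. maximum_matching E M \<and> v \<notin> \<Union>M)"
  unfolding GE_D_def by blast

lemma GE_A_iff: "a \<in> GE_A V E \<longleftrightarrow> a \<in> V \<and> a \<notin> GE_D V E \<and> (\<exists>d\<in>GE_D V E. adj E a d)"
  unfolding GE_A_def neighbourhood_def by blast

lemma GE_C_iff: "v \<in> GE_C V E \<longleftrightarrow> v \<in> V \<and> v \<notin> GE_A V E \<and> v \<notin> GE_D V E"
  unfolding GE_C_def by blast

lemma maximum_matching_covers_non_GE_D:
  "maximum_matching E M \<Longrightarrow> v \<in> V \<Longrightarrow> v \<notin> GE_D V E \<Longrightarrow> v \<in> \<Union>M"
  unfolding GE_D_def by blast

lemma GE_D_independent: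
  assumes g: "graph V E" and col: "two_colouring E col"
    and u: "u \<in> GE_D V E" and v: "v \<in> GE_D V E"
  shows "\<not> adj E u v"
proof
  assume uv: "adj E u v"
  obtain N where N: "maximum_matching E N" "u \<notin> \<Union>N"
    using u unfolding GE_D_iff by blast
  obtain N' where "maximum_matching E N'" "v \<notin> \<Union>N'" "v \<in> V"
    using v unfolding GE_D_iff by blast
  then obtain n where "alt_reachable V E N n v"
    using exposed_imp_alt_reachable[OF g N(1)] by blast
  then obtain Nv where Nv: "maximum_matching E Nv" "v \<notin> \<Union>Nv"
    and Nv_covered: "\<And>t. t \<in> \<Union>Nv \<Longrightarrow> col t \<noteq> col v \<Longrightarrow> t \<in> \<Union>N"
    using alt_reachable_imp_exposed[OF g N(1) col] by blast
  have "col u \<noteq> col v"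
    using col uv unfolding two_colouring_def by blast
  then have "u \<notin> \<Union>Nv"
    using Nv_covered N(2) by blast
  with Nv uv show False
    using maximum_matching_no_exposed_edge[OF g] unfolding adj_def by blast
qed

lemma GE_A_partner_in_GE_D:
  assumes g: "graph V E" and col: "two_colouring E col" and M: "maximum_matching E M"
    and a: "a \<in> GE_A V E" and aw: "{a, w} \<in> M"
  shows "w \<in> GE_D V E"
proof -
  have mM: "matching E M"
    using M unfolding maximum_matching_def by blast
  obtain d where d: "d \<in> GE_D V E" "adj E a d"
    using a unfolding GE_A_iff by blast
  then obtain N where "maximum_matching E N" "d \<notin> \<Union>N" "d \<in> V"
    unfolding GE_D_iff by blast
  then obtain n where "alt_reachable V E M n d"
    using exposed_imp_alt_reachable[OF g M] by blast
  moreover have "{d, a} \<in> E"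
    using d(2) unfolding adj_def by (simp add: insert_commute)
  ultimately have "alt_reachable V E M (Suc n) w"
    using aw by (rule alt_reachable_Suc)
  then obtain Nw where "maximum_matching E Nw" "w \<notin> \<Union>Nw"
    by (rule alt_reachable_imp_exposed[OF g M col])
  moreover have "w \<in> V"
    using graph_adjD(2)[OF g, of w a] aw matching_subset[OF mM] unfolding adj_def
    by (auto simp: insert_commute)
  ultimately show ?thesis
    unfolding GE_D_iff by blast
qed

lemma card_GE_A_le_card_matched_GE_D:
  assumes g: "graph V E" and col: "two_colouring E col" and M: "maximum_matching E M"
  shows "card (GE_A V E) \<le> card (\<Union>M \<inter> GE_D V E)"
proof -
  have mM: "matching E M"
    using M unfolding maximum_matching_def by blast
  define partner where "partner a = (SOME w. {a, w} \<in> M)" for a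
  have partner: "{a, partner a} \<in> M" if "a \<in> GE_A V E" for a
  proof -
    have "a \<in> V" "a \<notin> GE_D V E"
      using that unfolding GE_A_iff by blast+
    then have "a \<in> \<Union>M"
      by (rule maximum_matching_covers_non_GE_D[OF M])
    then obtain w where "{a, w} \<in> M" "a \<noteq> w" "w \<in> V"
      by (rule matching_partnerE[OF g mM])
    then show ?thesis
      unfolding partner_def by (metis someI)
  qed
  have "inj_on partner (GE_A V E)"
  proof (rule inj_onI)
    fix a b assume "a \<in> GE_A V E" "b \<in> GE_A V E" "partner a = partner b"
    then have "{partner a, a} \<in> M" "{partner a, b} \<in> M"
      using partner[of a] partner[of b] by (simp_all add: insert_commute)
    then show "a = b"
      by (rule matching_unique_partner[OF mM])
  qed
  moreover have "partner ` GE_A V E \<subseteq> \<Union>M \<inter> GE_D V E"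
    using partner GE_A_partner_in_GE_D[OF g col M] by blast
  moreover have "finite (\<Union>M \<inter> GE_D V E)"
    using g finite_subset[of "\<Union>M \<inter> GE_D V E" V] unfolding graph_def GE_D_def by blast
  ultimately show ?thesis
    by (rule card_inj_on_le)
qed

lemma GE_matching_number_bound:
  assumes g: "graph V E" and col: "two_colouring E col"
  shows "2 * card (GE_A V E) + card (GE_C V E) \<le> 2 * matching_number E"
proof -
  let ?A = "GE_A V E" and ?C = "GE_C V E" and ?D = "GE_D V E"
  obtain M where M: "maximum_matching E M"
    using maximum_matching_exists[OF g] by blast
  have mM: "matching E M"
    using M unfolding maximum_matching_def by blast
  have finV: "finite V"
    using g unfolding graph_def by blast
  have "\<Union>M \<subseteq> V"
    using matching_subset[OF mM] graph_vertices_subset[OF g] by blast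
  then have fin_UM: "finite (\<Union>M)"
    using finV finite_subset by blast
  have "card (?A \<union> ?C \<union> (\<Union>M \<inter> ?D)) = card ?A + card ?C + card (\<Union>M \<inter> ?D)"
  proof -
    have "finite ?A" "finite ?C"
      using finV unfolding GE_A_def GE_C_def neighbourhood_def by auto
    moreover have "?A \<inter> ?C = {}" "(?A \<union> ?C) \<inter> (\<Union>M \<inter> ?D) = {}"
      unfolding GE_C_def GE_A_def by auto
    ultimately show ?thesis
      using fin_UM by (simp add: card_Un_disjoint)
  qed
  moreover have "?A \<union> ?C \<subseteq> V - ?D"
    unfolding GE_A_def GE_C_def neighbourhood_def by blast
  then have "?A \<union> ?C \<union> (\<Union>M \<inter> ?D) \<subseteq> \<Union>M"
    using maximum_matching_covers_non_GE_D[OF M] by blast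
  then have "card (?A \<union> ?C \<union> (\<Union>M \<inter> ?D)) \<le> card (\<Union>M)"
    using fin_UM by (rule card_mono[rotated])
  moreover have "card (\<Union>M) = 2 * matching_number E"
    using card_Union_matching[OF g mM] M unfolding maximum_matching_def by simp
  ultimately show ?thesis
    using card_GE_A_le_card_matched_GE_D[OF g col M] by linarith
qed

lemma edge_disjoint_GE_A_subset_GE_C:
  assumes g: "graph V E" and col: "two_colouring E col"
    and e: "e \<in> E" and eA: "GE_A V E \<inter> e = {}"
  shows "e \<subseteq> GE_C V E"
proof -
  obtain x y where xy: "e = {x, y}" "x \<in> V" "y \<in> V"
    using e g unfolding graph_def by blast
  have no_D: "v \<notin> GE_D V E" if "{v, w} = e" for v w
  proof
    assume v: "v \<in> GE_D V E"
    have vw: "adj E v w" "w \<in> V" "w \<notin> GE_A V E"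
      using that e eA xy unfolding adj_def by auto
    then have "w \<notin> GE_D V E"
      using GE_D_independent[OF g col v] by blast
    then show False
      using vw v adj_commute unfolding GE_A_iff by metis
  qed
  have "x \<notin> GE_D V E" "y \<notin> GE_D V E"
    using no_D[of x y] no_D[of y x] xy by (auto simp: insert_commute)
  then show ?thesis
    using xy eA by (auto simp: GE_C_iff)
qed

section \<open>Forests and connected graphs\<close>

lemma is_cycle_take:
  assumes "distinct p" and adj_p: "\<And>i. Suc i < length p \<Longrightarrow> adj E (p ! i) (p ! Suc i)"
    and "2 \<le> j" "j < length p" and closing: "adj E (p ! j) (p ! 0)"
  shows "is_cycle E (take (Suc j) p)"
  unfolding is_cycle_def
proof (intro conjI allI impI)
  show "3 \<le> length (take (Suc j) p)" "distinct (take (Suc j) p)"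
    using assms(1,3,4) by auto
  show "adj E (take (Suc j) p ! i) (take (Suc j) p ! Suc i)"
    if "Suc i < length (take (Suc j) p)" for i
    using that adj_p[of i] assms(4) by simp
  have "last (take (Suc j) p) = p ! j"
    using assms(4) by (simp add: take_Suc_conv_app_nth)
  moreover have "hd (take (Suc j) p) = p ! 0"
    using assms(4) by (cases p) auto
  ultimately show "adj E (last (take (Suc j) p)) (hd (take (Suc j) p))"
    using closing by simp
qed

lemma acyclic_graph_has_leaf:
  assumes g: "graph V E" and ac: "acyclic_graph E" and S: "finite S" "S \<noteq> {}"
  shows "\<exists>v\<in>S. \<forall>a\<in>S. \<forall>b\<in>S. adj E v a \<longrightarrow> adj E v b \<longrightarrow> a = b"
proof (rule ccontr)
  assume "\<not> ?thesis"
  then have two_nbrs: "\<exists>a\<in>S. \<exists>b\<in>S. adj E v a \<and> adj E v b \<and> a \<noteq> b" if "v \<in> S" for v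
    using that by blast
  define P where "P = {p. distinct p \<and> set p \<subseteq> S \<and> p \<noteq> [] \<and>
    (\<forall>i. Suc i < length p \<longrightarrow> adj E (p ! i) (p ! Suc i))}"
  have "P \<subseteq> {p. set p \<subseteq> S \<and> length p \<le> card S}"
    unfolding P_def using S(1) by (auto simp flip: distinct_card intro: card_mono)
  then have "finite P"
    using finite_lists_length_le[OF S(1)] by (rule finite_subset)
  moreover obtain s where "s \<in> S"
    using S(2) by blast
  then have "[s] \<in> P"
    unfolding P_def by simp
  ultimately have "Max (length ` P) \<in> length ` P"
    by (intro Max_in) auto
  then obtain p where "p \<in> P" "length p = Max (length ` P)"
    by (metis imageE)
  with \<open>finite P\<close> have longest: "length q \<le> length p" if "q \<in> P" for q
    using that by simp
  from \<open>p \<in> P\<close> have p: "distinct p" "set p \<subseteq> S" "p \<noteq> []"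
    and adj_p: "\<And>i. Suc i < length p \<Longrightarrow> adj E (p ! i) (p ! Suc i)"
    unfolding P_def by auto
  then have "p ! 0 \<in> S"
    by (simp add: subset_iff)
  then obtain x where x: "x \<in> S" "adj E (p ! 0) x" and x1: "1 < length p \<Longrightarrow> x \<noteq> p ! 1"
    using two_nbrs by metis
  show False
  proof (cases "x \<in> set p")
    case False
    have "adj E x (p ! 0)"
      using x(2) adj_commute by metis
    then have "x # p \<in> P"
      unfolding P_def using False p x adj_p by (auto simp: nth_Cons split: nat.split)
    then show False
      using longest by fastforce
  next
    case True
    then obtain j where j: "j < length p" "p ! j = x"
      by (meson in_set_conv_nth)
    have "j \<noteq> 0"
      using j graph_adjD(1)[OF g x(2)] by metis
    moreover have "j \<noteq> 1"
      using j x1 by auto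
    ultimately have "2 \<le> j"
      by simp
    moreover have "adj E (p ! j) (p ! 0)"
      using j(2) x(2) adj_commute by metis
    ultimately have "is_cycle E (take (Suc j) p)"
      using is_cycle_take[OF p(1) adj_p _ j(1)] by blast
    then show False
      using ac unfolding acyclic_graph_def by blast
  qed
qed

lemma card_induced_edges_acyclic:
  assumes g: "graph V E" and ac: "acyclic_graph E"
  shows "finite S \<Longrightarrow> S \<noteq> {} \<Longrightarrow> card {e\<in>E. e \<subseteq> S} + 1 \<le> card S"
proof (induction "card S" arbitrary: S rule: less_induct)
  case less
  obtain v where v: "v \<in> S" and leaf: "\<forall>a\<in>S. \<forall>b\<in>S. adj E v a \<longrightarrow> adj E v b \<longrightarrow> a = b"
    using acyclic_graph_has_leaf[OF g ac less.prems] by blast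
  have finE: "finite E"
    by (rule graph_finite_edges[OF g])
  have leaf_edge: "\<exists>a\<in>S. e = {v, a} \<and> adj E v a" if e: "e \<in> E" "e \<subseteq> S" "v \<in> e" for e
  proof -
    obtain a where "e = {v, a}"
      using graph_edgeE[OF g e(1) e(3)] by blast
    with e show ?thesis
      unfolding adj_def by blast
  qed
  have "e1 = e2" if e12: "e1 \<in> {e\<in>E. e \<subseteq> S \<and> v \<in> e}" "e2 \<in> {e\<in>E. e \<subseteq> S \<and> v \<in> e}"
    for e1 e2
  proof -
    obtain a b where "a \<in> S" "e1 = {v, a}" "adj E v a" "b \<in> S" "e2 = {v, b}" "adj E v b"
      using leaf_edge e12 by (metis (no_types, lifting) mem_Collect_eq)
    then show ?thesis
      using leaf by blast
  qed
  then have at_v: "card {e\<in>E. e \<subseteq> S \<and> v \<in> e} \<le> 1"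
    using card_le_Suc0_iff_eq[of "{e\<in>E. e \<subseteq> S \<and> v \<in> e}"] finE by auto
  have "{e\<in>E. e \<subseteq> S} \<subseteq> {e\<in>E. e \<subseteq> S - {v}} \<union> {e\<in>E. e \<subseteq> S \<and> v \<in> e}"
    by blast
  then have "card {e\<in>E. e \<subseteq> S} \<le> card ({e\<in>E. e \<subseteq> S - {v}} \<union> {e\<in>E. e \<subseteq> S \<and> v \<in> e})"
    using finE by (intro card_mono) simp_all
  also have "\<dots> \<le> card {e\<in>E. e \<subseteq> S - {v}} + card {e\<in>E. e \<subseteq> S \<and> v \<in> e}"
    by (rule card_Un_le)
  finally have split: "card {e\<in>E. e \<subseteq> S} \<le> card {e\<in>E. e \<subseteq> S - {v}} + card {e\<in>E. e \<subseteq> S \<and> v \<in> e}" .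
  show ?case
  proof (cases "S = {v}")
    case True
    then have "{e\<in>E. e \<subseteq> S} = {}"
      using graph_card_edge[OF g] by (force dest: card_mono[rotated])
    then show ?thesis
      using True by simp
  next
    case False
    then have "S - {v} \<noteq> {}"
      using v by blast
    then have "card {e\<in>E. e \<subseteq> S - {v}} + 1 \<le> card (S - {v})"
      using less.hyps[OF card_Diff1_less[OF less.prems(1) v]] less.prems(1) by simp
    then show ?thesis
      using split at_v v less.prems(1) by (simp add: card_Diff_singleton)
  qed
qed

lemma acyclic_graph_two_colouring_on:
  assumes g: "graph V E" and ac: "acyclic_graph E"
  shows "finite S \<Longrightarrow> \<exists>col. \<forall>u\<in>S. \<forall>w\<in>S. adj E u w \<longrightarrow> col u \<noteq> (col w :: bool)"
proof (induction "card S" arbitrary: S rule: less_induct)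
  case less
  show ?case
  proof (cases "S = {}")
    case False
    obtain v where v: "v \<in> S" and leaf: "\<forall>a\<in>S. \<forall>b\<in>S. adj E v a \<longrightarrow> adj E v b \<longrightarrow> a = b"
      using acyclic_graph_has_leaf[OF g ac less.prems False] by blast
    obtain col0 :: "'a \<Rightarrow> bool"
      where col0: "\<forall>u\<in>S - {v}. \<forall>w\<in>S - {v}. adj E u w \<longrightarrow> col0 u \<noteq> col0 w"
      using less.hyps[OF card_Diff1_less[OF less.prems v]] less.prems by blast
    show ?thesis
    proof (cases "\<exists>a\<in>S. adj E v a")
      case True
      then obtain a where a: "a \<in> S" "adj E v a"
        by blast
      have "a \<noteq> v"
        using graph_adjD(1)[OF g a(2)] by simp
      define col where "col = col0(v := \<not> col0 a)"
      have "col u \<noteq> col w" if uw: "u \<in> S" "w \<in> S" "adj E u w" for u w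
      proof -
        consider "u = v" | "w = v" | "u \<noteq> v" "w \<noteq> v"
          by blast
        then show ?thesis
        proof cases
          case 1
          then have "w = a"
            using leaf uw a by blast
          then show ?thesis
            using 1 \<open>a \<noteq> v\<close> unfolding col_def by simp
        next
          case 2
          then have "u = a"
            using leaf uw a adj_commute by metis
          then show ?thesis
            using 2 \<open>a \<noteq> v\<close> unfolding col_def by simp
        next
          case 3
          then show ?thesis
            using col0 uw unfolding col_def by simp
        qed
      qed
      then show ?thesis
        by blast
    next
      case False
      then have "\<forall>u\<in>S. \<forall>w\<in>S. adj E u w \<longrightarrow> col0 u \<noteq> col0 w"
        using col0 v adj_commute by (metis Diff_iff singletonD)
      then show ?thesis
        by blast
    qed
  qed simp
qed

lemma acyclic_graph_two_colouring:
  assumes g: "graph V E" and ac: "acyclic_graph E"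
  obtains col where "two_colouring E col"
proof -
  have "finite V"
    using g unfolding graph_def by blast
  then obtain col where "\<forall>u\<in>V. \<forall>w\<in>V. adj E u w \<longrightarrow> col u \<noteq> (col w :: bool)"
    using acyclic_graph_two_colouring_on[OF g ac] by blast
  then have "two_colouring E col"
    unfolding two_colouring_def using graph_adjD[OF g] by blast
  then show thesis
    by (rule that)
qed

lemma connected_parentE:
  assumes c: "connected V E" and r: "r \<in> V"
  obtains parent :: "'a \<Rightarrow> 'a" and height :: "'a \<Rightarrow> nat"
  where "\<And>v. v \<in> V - {r} \<Longrightarrow> adj E (parent v) v \<and> height (parent v) < height v"
proof -
  define height where "height v = (LEAST k. (adj E ^^ k) r v)" for v
  have "\<exists>u. adj E u v \<and> height u < height v" if v: "v \<in> V - {r}" for v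
  proof -
    have "(adj E)\<^sup>*\<^sup>* r v"
      using c r v unfolding connected_def by blast
    then obtain k where "(adj E ^^ k) r v"
      using rtranclp_power by metis
    then have walk: "(adj E ^^ height v) r v"
      unfolding height_def by (rule LeastI)
    moreover have "height v \<noteq> 0"
      using walk v by (metis Diff_iff insertI1 relpowp.simps(1) eq_id_iff)
    then obtain m where m: "height v = Suc m"
      using not0_implies_Suc by blast
    ultimately obtain u where "(adj E ^^ m) r u" "adj E u v"
      by (metis relpowp_Suc_E)
    moreover have "height u \<le> m"
      unfolding height_def using \<open>(adj E ^^ m) r u\<close> by (rule Least_le)
    ultimately show ?thesis
      using m by auto
  qed
  then obtain parent where "\<forall>v\<in>V - {r}. adj E (parent v) v \<and> height (parent v) < height v"
    by metis
  then show thesis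
    using that by blast
qed

lemma connected_card_le_card_edges_Suc:
  assumes g: "graph V E" and c: "connected V E"
  shows "card V \<le> card E + 1"
proof -
  obtain r where r: "r \<in> V"
    using c unfolding connected_def by blast
  obtain parent :: "'a \<Rightarrow> 'a" and height :: "'a \<Rightarrow> nat"
    where parent: "\<And>v. v \<in> V - {r} \<Longrightarrow> adj E (parent v) v \<and> height (parent v) < height v"
    using connected_parentE[OF c r] by blast
  have "inj_on (\<lambda>v. {parent v, v}) (V - {r})"
  proof (rule inj_onI)
    fix v w assume v: "v \<in> V - {r}" and w: "w \<in> V - {r}" and vw: "{parent v, v} = {parent w, w}"
    show "v = w"
    proof (rule ccontr)
      assume "v \<noteq> w"
      then have "parent v = w" "parent w = v"
        using vw by (auto simp: doubleton_eq_iff)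
      then show False
        using parent[OF v] parent[OF w] by simp
    qed
  qed
  moreover have "(\<lambda>v. {parent v, v}) ` (V - {r}) \<subseteq> E"
    using parent unfolding adj_def by blast
  ultimately have "card (V - {r}) \<le> card E"
    using graph_finite_edges[OF g] by (rule card_inj_on_le)
  then show ?thesis
    using r by simp
qed

lemma sum_degree_eq_sum_card_Int:
  assumes "finite E" "finite A"
  shows "(\<Sum>a\<in>A. degree E a) = (\<Sum>e\<in>E. card (A \<inter> e))"
proof -
  have "(\<Sum>a\<in>A. degree E a) = (\<Sum>a\<in>A. \<Sum>e\<in>E. of_bool (a \<in> e))"
    unfolding degree_def using assms(1) by (simp add: Int_def)
  also have "\<dots> = (\<Sum>e\<in>E. \<Sum>a\<in>A. of_bool (a \<in> e))"
    by (rule sum.swap)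
  also have "\<dots> = (\<Sum>e\<in>E. card (A \<inter> e))"
    using assms(2) by simp
  finally show ?thesis .
qed

text \<open>Edges inside \<open>A\<close> are counted twice by the degrees of \<open>A\<close>.\<close>
lemma card_edges_le_sum_degree:
  assumes g: "graph V E" and A: "A \<subseteq> V" and cover: "\<And>e. e \<in> E \<Longrightarrow> A \<inter> e = {} \<Longrightarrow> e \<subseteq> C"
  shows "card E + card {e\<in>E. e \<subseteq> A} \<le> (\<Sum>a\<in>A. degree E a) + card {e\<in>E. e \<subseteq> C}"
proof -
  have finE: "finite E" and finA: "finite A"
    using graph_finite_edges[OF g] A g finite_subset unfolding graph_def by blast+
  have per_edge: "1 + of_bool (e \<subseteq> A) \<le> card (A \<inter> e) + (of_bool (e \<subseteq> C) :: nat)"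
    if e: "e \<in> E" for e
  proof -
    have "card e = 2"
      by (rule graph_card_edge[OF g e])
    then have fin: "finite e" and "e \<noteq> {}"
      by (auto intro: card_ge_0_finite)
    consider "e \<subseteq> A" | "A \<inter> e = {}" | "A \<inter> e \<noteq> {}"
      by blast
    then show ?thesis
    proof cases
      case 1
      then show ?thesis
        using \<open>card e = 2\<close> by (simp add: Int_absorb1)
    next
      case 2
      then show ?thesis
        using cover[OF e] \<open>e \<noteq> {}\<close> by auto
    next
      case 3
      then have "1 \<le> card (A \<inter> e)"
        using fin by (simp add: Suc_le_eq card_gt_0_iff)
      moreover have "card (A \<inter> e) \<le> 2"
        using fin \<open>card e = 2\<close> by (metis card_mono inf_le2)
      ultimately show ?thesis
        using \<open>card e = 2\<close> fin by (cases "e \<subseteq> A") (auto simp: Int_absorb1)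
    qed
  qed
  have "card E + card {e\<in>E. e \<subseteq> A} = (\<Sum>e\<in>E. 1 + (of_bool (e \<subseteq> A) :: nat))"
    using finE by (simp add: sum_Suc Int_def)
  also have "\<dots> \<le> (\<Sum>e\<in>E. card (A \<inter> e) + (of_bool (e \<subseteq> C) :: nat))"
    by (rule sum_mono) (rule per_edge)
  also have "\<dots> = (\<Sum>a\<in>A. degree E a) + card {e\<in>E. e \<subseteq> C}"
    using sum_degree_eq_sum_card_Int[OF finE finA] finE by (simp add: sum.distrib Int_def)
  finally show ?thesis .
qed

section \<open>Trees in the class \<open>\<T>\<close>\<close>

lemma sum_bounded_eq_imp_eq:
  fixes f :: "'a \<Rightarrow> nat"
  assumes "finite A" "\<And>a. a \<in> A \<Longrightarrow> f a \<le> c" "sum f A = c * card A" "a \<in> A"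
  shows "f a = c"
proof (rule ccontr)
  assume "f a \<noteq> c"
  then have "sum f A < (\<Sum>_\<in>A. c)"
    using assms by (intro sum_strict_mono_ex1) (auto intro!: bexI[of _ a] simp: le_neq_implies_less)
  then show False
    using assms(3) by simp
qed

lemma bipartite_with_GE_A_GE_D:
  assumes g: "graph V E" and col: "two_colouring E col"
    and C: "GE_C V E = {}" and A: "{e\<in>E. e \<subseteq> GE_A V E} = {}"
  shows "bipartite_with V E (GE_A V E) (GE_D V E)"
  unfolding bipartite_with_def
proof (intro conjI ballI)
  show "GE_A V E \<union> GE_D V E = V" "GE_A V E \<inter> GE_D V E = {}"
    using C unfolding GE_C_def GE_A_def GE_D_def neighbourhood_def by blast+
  fix e assume e: "e \<in> E"
  obtain x y where xy: "e = {x, y}" "x \<noteq> y" "x \<in> V" "y \<in> V"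
    using e g unfolding graph_def by blast
  have "GE_A V E \<inter> e \<noteq> {}"
    using edge_disjoint_GE_A_subset_GE_C[OF g col e] C xy by blast
  moreover have "\<not> e \<subseteq> GE_A V E"
    using A e by blast
  ultimately have "(x \<in> GE_A V E \<and> y \<notin> GE_A V E) \<or> (y \<in> GE_A V E \<and> x \<notin> GE_A V E)"
    using xy by blast
  moreover have "GE_A V E \<union> GE_D V E = V"
    using C unfolding GE_C_def GE_A_def GE_D_def neighbourhood_def by blast
  ultimately show "\<exists>a\<in>GE_A V E. \<exists>d\<in>GE_D V E. e = {a, d}"
    using xy by (auto simp: insert_commute)
qed

text \<open>With \<open>D\<close> independent, \<open>|V| \<le> |E| + 1\<close>, the degree bound on \<open>A\<close> and
  \<open>2 |A| + |C| \<le> 2 \<nu>\<close>, the hypothesis \<open>|V| = 3 \<nu> + 1\<close> leaves \<open>3 |C| / 2 + |E[A]| \<le> |E[C]|\<close>;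
  as \<open>E[C]\<close> is a forest on \<open>C\<close>, this forces \<open>C = \<emptyset>\<close>, and then every estimate is an equality.\<close>
lemma class_T_GE_tight:
  assumes T: "class_T V E"
  shows "GE_C V E = {}" "{e\<in>E. e \<subseteq> GE_A V E} = {}" "matching_number E = card (GE_A V E)"
    "(\<Sum>a\<in>GE_A V E. degree E a) = 3 * card (GE_A V E)"
proof -
  let ?A = "GE_A V E" and ?C = "GE_C V E"
  have g: "graph V E" and c: "connected V E" and ac: "acyclic_graph E"
    and degA: "\<forall>a\<in>?A. degree E a \<le> 3" and nu: "3 * matching_number E + 1 = card V"
    using T unfolding class_T_def tree_def by blast+
  obtain col where col: "two_colouring E col"
    using acyclic_graph_two_colouring[OF g ac] by blast
  have A_sub: "?A \<subseteq> V" and C_sub: "?C \<subseteq> V"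
    unfolding GE_A_def GE_C_def neighbourhood_def by blast+
  have edges: "card E + card {e\<in>E. e \<subseteq> ?A} \<le> (\<Sum>a\<in>?A. degree E a) + card {e\<in>E. e \<subseteq> ?C}"
    using card_edges_le_sum_degree[OF g A_sub edge_disjoint_GE_A_subset_GE_C[OF g col]] .
  have deg: "(\<Sum>a\<in>?A. degree E a) \<le> 3 * card ?A"
    using sum_bounded_above[of ?A "degree E" 3] degA by simp
  have match: "2 * card ?A + card ?C \<le> 2 * matching_number E"
    by (rule GE_matching_number_bound[OF g col])
  have VE: "card V \<le> card E + 1"
    by (rule connected_card_le_card_edges_Suc[OF g c])
  show C: "?C = {}"
  proof (rule ccontr)
    assume "?C \<noteq> {}"
    moreover have "finite ?C"
      using C_sub g finite_subset unfolding graph_def by blast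
    ultimately have "card {e\<in>E. e \<subseteq> ?C} + 1 \<le> card ?C"
      using card_induced_edges_acyclic[OF g ac] by blast
    then show False
      using edges deg match VE nu by linarith
  qed
  have "{e\<in>E. e \<subseteq> ?C} = {}"
    using C graph_card_edge[OF g] by force
  then have "card {e\<in>E. e \<subseteq> ?C} = 0" "card ?C = 0"
    using C by simp_all
  then have "card {e\<in>E. e \<subseteq> ?A} = 0" "matching_number E = card ?A"
    "(\<Sum>a\<in>?A. degree E a) = 3 * card ?A"
    using edges deg match VE nu by linarith+
  then show "{e\<in>E. e \<subseteq> ?A} = {}" "matching_number E = card ?A"
    "(\<Sum>a\<in>?A. degree E a) = 3 * card ?A"
    using graph_finite_edges[OF g] by simp_all
qed

theorem lemma1:
  fixes V :: "'a set" and E :: "'a set set"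
  assumes "class_T V E"
  shows "GE_C V E = {} \<and> independent V E (GE_A V E) \<and>
         (\<forall>v\<in>GE_A V E. degree E v = 3) \<and> matching_number E = card (GE_A V E) \<and>
         bipartite_with V E (GE_A V E) (GE_D V E)"
proof (intro conjI ballI)
  have g: "graph V E" and ac: "acyclic_graph E" and degA: "\<forall>a\<in>GE_A V E. degree E a \<le> 3"
    using assms unfolding class_T_def tree_def by blast+
  obtain col where col: "two_colouring E col"
    using acyclic_graph_two_colouring[OF g ac] by blast
  note tight = class_T_GE_tight[OF assms]
  show "GE_C V E = {}" "matching_number E = card (GE_A V E)"
    using tight by blast+
  show "independent V E (GE_A V E)"
    using tight(2) unfolding independent_def adj_def GE_A_def neighbourhood_def by blast
  show "degree E v = 3" if "v \<in> GE_A V E" for v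
    using sum_bounded_eq_imp_eq[OF _ _ tight(4) that] degA g
    unfolding GE_A_def neighbourhood_def graph_def by auto
  show "bipartite_with V E (GE_A V E) (GE_D V E)"
    using bipartite_with_GE_A_GE_D[OF g col tight(1,2)] .
qed

end
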